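(* Assume the setting in the context. Then there is a positive constant $\tilde C$, depending only on $n,\Omega,\Omega_0,\mathrm{dist}(\Omega_0,\partial\Omega),\varphi,\psi,\eta,D_\ast$, such that $$-\tilde C-D_\ast\Delta u_\varepsilon\leq f_\varepsilon\leq\tilde C\quad\text{in }\Omega_0.$$
   Context: Let $n\geq2$; let $\Omega_0,\Omega\subset\mathbb R^n$ be bounded, open, smooth, convex domains, $\Omega$ uniformly convex, $\overline{\Omega_0}\subset\Omega$. Let $\varphi\in C^5(\overline\Omega)$ be convex, $\psi\in C^3(\overline\Omega)$ with $\min_{\partial\Omega}\psi>0$. Let $F^0:\mathbb R^n\times\mathbb R\to\mathbb R$ be smooth with, for all $x\in\Omega_0$, $z,\tilde z\in\mathbb R$: $(\partial_zF^0(x,z)-\partial_zF^0(x,\tilde z))(z-\tilde z)\geq0$ and $|F^0(x,z)|+|\partial_zF^0(x,z)|\leq\eta(|z|)$, where $\eta:[0,\infty)\to[0,\infty)$ is continuous and increasing. Let $F^1:\mathbb R^n\times\mathbb R^n\to\mathbb R$ be smooth with, for all $x\in\Omega_0$, $\mathbf p\in\mathbb R^n$: $0\leq(F^1_{p_ip_j}(x,\mathbf p))\leq D_\ast I_n$ and $|F^1_{p_ix_i}(x,\mathbf p)|\leq D_\ast(|\mathbf p|+1)$ for each $i$ (no summation), with $D_\ast>0$. Let $\rho$ be a uniformly convex defining function of $\Omega$ ($\Omega=\{\rho<0\}$, $\rho=0$, $D\rho\neq0$ on $\partial\Omega$), and $\mu_\varepsilon=\varphi+\varepsilon^{1/(3n^2)}(e^\rho-1)$.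 For $\varepsilon>0$, the system $(\mathrm{P}_\varepsilon)$ for a uniformly convex $u_\varepsilon$ is: $\varepsilon U_\varepsilon^{ij}D_{ij}w_\varepsilon=f_\varepsilon$ in $\Omega$, $w_\varepsilon=(\det D^2u_\varepsilon)^{-1}$ in $\Omega$, $u_\varepsilon=\varphi$ on $\partial\Omega$, $w_\varepsilon=\psi$ on $\partial\Omega$, where $(U^{ij}_\varepsilon)=(\det D^2u_\varepsilon)(D^2u_\varepsilon)^{-1}$ and $f_\varepsilon=\big(\partial_zF^0(x,u_\varepsilon)-\sum_i\partial_{x_i}[\partial_{p_i}F^1(x,Du_\varepsilon)]\big)\chi_{\Omega_0}+\frac{u_\varepsilon-\mu_\varepsilon}{\varepsilon}\chi_{\Omega\setminus\Omega_0}$. Standing assumptions: $s\in(n,\infty)$ is fixed; $\varepsilon_0>0$ is a constant depending only on $n,\Omega,\Omega_0,\varphi,\psi,\eta,D_\ast,\mathrm{dist}(\Omega_0,\partial\Omega)$ such that for all $\varepsilon\leq\varepsilon_0$ every uniformly convex solution $u_\varepsilon\in W^{4,s}(\Omega)$ of $(\mathrm{P}_\varepsilon)$ satisfies $\|u_\varepsilon\|_{L^\infty(\Omega)}\leq C$ with $C$ independent of $\varepsilon$ (such $\varepsilon_0$ exists); $\varepsilon\in(0,\varepsilon_0]$ and $u_\varepsilon\in W^{4,s}(\Omega)$ is a uniformly convex solution of $(\mathrm{P}_\varepsilon)$. *)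

theory Defs
  imports "HOL-Analysis.Analysis"
begin

definition partial :: "'a::euclidean_space \<Rightarrow> ('a \<Rightarrow> real) \<Rightarrow> 'a \<Rightarrow> real" where
  "partial b f x = deriv (\<lambda>t. f (x + t *\<^sub>R b)) 0"

fun partials :: "'a::euclidean_space list \<Rightarrow> ('a \<Rightarrow> real) \<Rightarrow> 'a \<Rightarrow> real" where
  "partials [] f = f"
| "partials (b # bs) f = partial b (partials bs f)"

fun Ck :: "nat \<Rightarrow> 'a::euclidean_space set \<Rightarrow> ('a \<Rightarrow> real) \<Rightarrow> bool" where
  "Ck 0 S f = continuous_on S f"
| "Ck (Suc k) S f = ((\<forall>x\<in>S. f differentiable (at x)) \<and> (\<forall>b\<in>Basis. Ck k S (partial b f)))"

text \<open>C^k(closure S): C^k in S, all derivatives up to order k uniformly continuous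
  on S (hence extend continuously to the closure), f continuous on the closure.\<close>
definition Ck_bar :: "nat \<Rightarrow> 'a::euclidean_space set \<Rightarrow> ('a \<Rightarrow> real) \<Rightarrow> bool" where
  "Ck_bar k S f \<longleftrightarrow> Ck k S f \<and> continuous_on (closure S) f \<and>
     (\<forall>bs. set bs \<subseteq> Basis \<and> length bs \<le> k \<longrightarrow> uniformly_continuous_on S (partials bs f))"

definition smooth :: "('a::euclidean_space \<Rightarrow> real) \<Rightarrow> bool" where
  "smooth f \<longleftrightarrow> (\<forall>k. Ck k UNIV f)"

definition grad :: "(real^'n \<Rightarrow> real) \<Rightarrow> real^'n \<Rightarrow> real^'n" where
  "grad f x = (\<chi> i. partial (axis i 1) f x)"

definition hess :: "(real^'n \<Rightarrow> real) \<Rightarrow> real^'n \<Rightarrow> real^'n^'n" where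
  "hess f x = (\<chi> i j. partial (axis i 1) (partial (axis j 1) f) x)"

definition laplacian :: "(real^'n \<Rightarrow> real) \<Rightarrow> real^'n \<Rightarrow> real" where
  "laplacian f x = (\<Sum>i\<in>UNIV. partial (axis i 1) (partial (axis i 1) f) x)"

definition smooth_domain :: "(real^'n) set \<Rightarrow> bool" where
  "smooth_domain S \<longleftrightarrow> (\<exists>r. smooth r \<and> S = {x. r x < 0} \<and> (\<forall>x\<in>frontier S. r x = 0 \<and> grad r x \<noteq> 0))"

definition test_fun :: "(real^'n) set \<Rightarrow> (real^'n \<Rightarrow> real) \<Rightarrow> bool" where
  "test_fun S \<phi> \<longleftrightarrow> smooth \<phi> \<and> compact (closure {x. \<phi> x \<noteq> 0}) \<and> closure {x. \<phi> x \<noteq> 0} \<subseteq> S"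

definition Lp :: "real \<Rightarrow> (real^'n) set \<Rightarrow> (real^'n \<Rightarrow> real) \<Rightarrow> bool" where
  "Lp p S v \<longleftrightarrow> set_borel_measurable lborel S v \<and> set_integrable lborel S (\<lambda>x. \<bar>v x\<bar> powr p)"

definition weak_deriv :: "(real^'n) set \<Rightarrow> (real^'n) list \<Rightarrow> (real^'n \<Rightarrow> real) \<Rightarrow> (real^'n \<Rightarrow> real) \<Rightarrow> bool" where
  "weak_deriv S bs u v \<longleftrightarrow> (\<forall>\<phi>. test_fun S \<phi> \<longrightarrow>
      set_integrable lborel S (\<lambda>x. u x * partials bs \<phi> x) \<and>
      set_integrable lborel S (\<lambda>x. v x * \<phi> x) \<and>
      (LINT x:S|lborel. u x * partials bs \<phi> x) = (-1) ^ length bs * (LINT x:S|lborel. v x * \<phi> x))"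

definition sobolev :: "nat \<Rightarrow> real \<Rightarrow> (real^'n) set \<Rightarrow> (real^'n \<Rightarrow> real) \<Rightarrow> bool" where
  "sobolev k p S u \<longleftrightarrow> (\<forall>bs. set bs \<subseteq> Basis \<and> length bs \<le> k \<longrightarrow> (\<exists>v. Lp p S v \<and> weak_deriv S bs u v))"

definition mu_eps :: "(real^'n \<Rightarrow> real) \<Rightarrow> (real^'n \<Rightarrow> real) \<Rightarrow> real \<Rightarrow> real^'n \<Rightarrow> real" where
  "mu_eps \<phi> \<rho> \<epsilon> x = \<phi> x + \<epsilon> powr (1 / (3 * real (CARD('n))^2)) * (exp (\<rho> x) - 1)"

definition f_eps :: "(real^'n) set \<Rightarrow> (real^'n \<Rightarrow> real \<Rightarrow> real) \<Rightarrow> (real^'n \<Rightarrow> real^'n \<Rightarrow> real)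
    \<Rightarrow> (real^'n \<Rightarrow> real) \<Rightarrow> (real^'n \<Rightarrow> real) \<Rightarrow> real \<Rightarrow> (real^'n \<Rightarrow> real) \<Rightarrow> real^'n \<Rightarrow> real" where
  "f_eps \<Omega>0 F0 F1 \<phi> \<rho> \<epsilon> u x =
     (if x \<in> \<Omega>0 then
        deriv (F0 x) (u x) - (\<Sum>i\<in>UNIV. partial (axis i 1) (\<lambda>y. partial (axis i 1) (F1 y) (grad u y)) x)
      else (u x - mu_eps \<phi> \<rho> \<epsilon> x) / \<epsilon>)"

definition uniformly_convex_fun :: "(real^'n) set \<Rightarrow> (real^'n \<Rightarrow> real) \<Rightarrow> bool" where
  "uniformly_convex_fun S u \<longleftrightarrow> (\<exists>l>0. \<forall>x\<in>S. \<forall>\<xi>. \<xi> \<bullet> (hess u x *v \<xi>) \<ge> l * norm \<xi> ^ 2)"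

text \<open>u is a uniformly convex W^{4,s}(Omega) solution of (P_eps). u denotes the
  continuous representative, which lies in C^3(closure Omega) (Morrey, s > n).
  w = (det D^2 u)^{-1}; U = cofactor matrix of D^2 u; the fourth-order equation
  holds a.e. with weak second derivatives of w.\<close>
definition solves_P :: "(real^'n) set \<Rightarrow> (real^'n) set \<Rightarrow> (real^'n \<Rightarrow> real \<Rightarrow> real) \<Rightarrow> (real^'n \<Rightarrow> real^'n \<Rightarrow> real)
    \<Rightarrow> (real^'n \<Rightarrow> real) \<Rightarrow> (real^'n \<Rightarrow> real) \<Rightarrow> (real^'n \<Rightarrow> real) \<Rightarrow> real \<Rightarrow> real \<Rightarrow> (real^'n \<Rightarrow> real) \<Rightarrow> bool" where
  "solves_P \<Omega> \<Omega>0 F0 F1 \<phi> \<psi> \<rho> s \<epsilon> u \<longleftrightarrow>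
     sobolev 4 s \<Omega> u \<and> Ck_bar 3 \<Omega> u \<and> uniformly_convex_fun \<Omega> u \<and>
     (let w = (\<lambda>x. 1 / det (hess u x));
          U = (\<lambda>x. det (hess u x) *\<^sub>R matrix_inv (hess u x))
      in (\<exists>v. (\<forall>i j. weak_deriv \<Omega> [axis i 1, axis j 1] w (v i j)) \<and>
              (AE x in lborel. x \<in> \<Omega> \<longrightarrow>
                 \<epsilon> * (\<Sum>i\<in>UNIV. \<Sum>j\<in>UNIV. U x $ i $ j * v i j x) = f_eps \<Omega>0 F0 F1 \<phi> \<rho> \<epsilon> u x)) \<and>
         (\<forall>x0\<in>frontier \<Omega>. (u \<longlongrightarrow> \<phi> x0) (at x0 within \<Omega>) \<and> (w \<longlongrightarrow> \<psi> x0) (at x0 within \<Omega>)))"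

end

theory Submission
  imports Defs
begin

(* On the inner domain the right-hand side is F0_z(x, u) minus the divergence of
   x |-> D_p F1(x, Du), and the chain rule splits that divergence into
   sum_i F1_{p_i x_i}(x, Du) + tr (D^2 u * D_p^2 F1(x, Du)).
   The first sum is at most n D_* (|Du| + 1), and |Du| <= 2C/d on the inner domain:
   a convex function bounded by C on a ball of radius d has a gradient of size at most
   2C/d at the centre. For the trace, D^2 u is symmetric (Schwarz) and positive
   semidefinite, and the trace of a product of two positive semidefinite matrices is
   nonnegative: split off rank-one pieces v v^T, for which tr (v v^T B) = v . B v.
   Applied to D_p^2 F1 and to D_* I - D_p^2 F1 this gives 0 <= tr <= D_* Delta u.
   Finally |F0_z(x, u)| <= eta(C). *)

section \<open>Partial derivatives\<close>

lemma has_real_derivative_along_line: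
  fixes f :: "'a::euclidean_space \<Rightarrow> real"
  assumes "(f has_derivative f') (at (a + s *\<^sub>R b))"
  shows "((\<lambda>t. f (a + t *\<^sub>R b)) has_real_derivative f' b) (at s)"
proof -
  have "((\<lambda>t. a + t *\<^sub>R b) has_derivative (\<lambda>t. t *\<^sub>R b)) (at s)"
    by (auto intro!: derivative_eq_intros)
  from diff_chain_at[OF this assms]
  have "((\<lambda>t. f (a + t *\<^sub>R b)) has_derivative (\<lambda>t. t * f' b)) (at s)"
    using linear_scale[OF has_derivative_linear[OF assms]] by (simp add: o_def)
  then show ?thesis by (simp add: has_field_derivative_def mult.commute[of _ "f' b"])
qed

lemma partial_eq_derivative:
  fixes f :: "'a::euclidean_space \<Rightarrow> real"
  assumes "(f has_derivative f') (at y)"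
  shows "partial b f y = f' b"
  unfolding partial_def
  by (rule DERIV_imp_deriv, rule has_real_derivative_along_line) (simp add: assms)

lemma differentiable_along_line:
  fixes f :: "'a::euclidean_space \<Rightarrow> real"
  assumes "f differentiable (at (a + s *\<^sub>R b))"
  shows "((\<lambda>t. f (a + t *\<^sub>R b)) has_real_derivative partial b f (a + s *\<^sub>R b)) (at s)"
proof -
  obtain f' where "(f has_derivative f') (at (a + s *\<^sub>R b))"
    using assms differentiable_def by blast
  with has_real_derivative_along_line partial_eq_derivative show ?thesis by metis
qed

lemma linear_eq_sum_axis:
  fixes L :: "real^'n \<Rightarrow> real"
  assumes "linear L"
  shows "L h = (\<Sum>i\<in>UNIV. h$i * L (axis i 1))"
proof -
  have "L h = L (\<Sum>i\<in>UNIV. h$i *\<^sub>R axis i 1)"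
    using basis_expansion[of h] by (simp add: scalar_mult_eq_scaleR)
  then show ?thesis by (simp add: linear_sum[OF assms] linear_scale[OF assms])
qed

lemma partial_eq_grad_inner:
  fixes f :: "real^'n \<Rightarrow> real"
  assumes "f differentiable (at y)"
  shows "partial b f y = grad f y \<bullet> b"
proof -
  obtain f' where f': "(f has_derivative f') (at y)"
    using assms differentiable_def by blast
  have "f' b = (\<Sum>i\<in>UNIV. b$i * f' (axis i 1))"
    using linear_eq_sum_axis[OF has_derivative_linear[OF f']] .
  then show ?thesis
    by (simp add: partial_eq_derivative[OF f'] grad_def inner_vec_def mult.commute)
qed

lemma has_vector_derivative_grad_along_line:
  fixes u :: "real^'n \<Rightarrow> real"
  assumes "\<forall>j. partial (axis j 1) u differentiable (at (x + s *\<^sub>R e))"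
  shows "((\<lambda>t. grad u (x + t *\<^sub>R e)) has_vector_derivative (e v* hess u (x + s *\<^sub>R e))) (at s)"
  unfolding has_vector_derivative_def
proof (subst has_derivative_componentwise_within, intro ballI)
  fix b :: "real^'n" assume "b \<in> Basis"
  then obtain j where b: "b = axis j 1" by (auto simp: Basis_vec_def)
  have "(e v* hess u (x + s *\<^sub>R e)) $ j = partial e (partial (axis j 1) u) (x + s *\<^sub>R e)"
    using partial_eq_grad_inner[of "partial (axis j 1) u" "x + s *\<^sub>R e" e] assms
    by (simp add: vector_matrix_mult_def hess_def grad_def inner_vec_def mult.commute)
  with differentiable_along_line[of "partial (axis j 1) u" x s e] assms
  show "((\<lambda>t. grad u (x + t *\<^sub>R e) \<bullet> b) has_derivative
      (\<lambda>h. h *\<^sub>R (e v* hess u (x + s *\<^sub>R e)) \<bullet> b)) (at s within UNIV)"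
    by (simp add: b inner_axis grad_def has_field_derivative_def mult_commute_abs)
qed

lemma Ck3_imp_differentiable:
  fixes u :: "real^'n \<Rightarrow> real"
  assumes "Ck 3 S u"
  shows "\<forall>y\<in>S. u differentiable (at y)"
    and "\<forall>y\<in>S. \<forall>j. partial (axis j 1) u differentiable (at y)"
    and "\<forall>y\<in>S. \<forall>i j. partial (axis i 1) (partial (axis j 1) u) differentiable (at y)"
  using assms by (simp_all add: numeral_3_eq_3 Basis_vec_def)

lemma smooth_imp_partial_differentiable:
  fixes G :: "'a::euclidean_space \<Rightarrow> real"
  assumes "smooth G" "b \<in> Basis"
  shows "partial b G differentiable (at z)"
  using assms spec[OF assms(1)[unfolded smooth_def], of 2] by (simp add: numeral_2_eq_2)

lemma partial_snd_eq_partial_uncurried: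
  fixes F :: "'a::euclidean_space \<Rightarrow> 'b::euclidean_space \<Rightarrow> real"
  shows "partial b (F y) q = partial (0, b) (\<lambda>z. F (fst z) (snd z)) (y, q)"
  unfolding partial_def by simp

lemma partial_partial_snd_eq_partial_uncurried:
  fixes F :: "'a::euclidean_space \<Rightarrow> 'b::euclidean_space \<Rightarrow> real"
  shows "partial c (partial b (F y)) q
       = partial (0, c) (partial (0, b) (\<lambda>z. F (fst z) (snd z))) (y, q)"
  by (simp add: partial_snd_eq_partial_uncurried[of b F] partial_def[of c] partial_def[of "(0, c)"])

lemma partial_fst_partial_snd_eq_partial_uncurried:
  fixes F :: "'a::euclidean_space \<Rightarrow> 'b::euclidean_space \<Rightarrow> real"
  shows "partial c (\<lambda>y. partial b (F y) q) x
       = partial (c, 0) (partial (0, b) (\<lambda>z. F (fst z) (snd z))) (x, q)"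
  by (simp add: partial_snd_eq_partial_uncurried[of b F] partial_def[of c] partial_def[of "(c, 0)"])

section \<open>Symmetry of second derivatives\<close>

lemma mixed_difference_mean_value:
  fixes f :: "'a::euclidean_space \<Rightarrow> real"
  assumes h: "h > 0"
    and box: "\<And>s t. 0 \<le> s \<Longrightarrow> s \<le> h \<Longrightarrow> 0 \<le> t \<Longrightarrow> t \<le> h \<Longrightarrow>
      x + s *\<^sub>R a + t *\<^sub>R b \<in> T"
    and df: "\<forall>y\<in>T. f differentiable (at y)"
    and da: "\<forall>y\<in>T. partial a f differentiable (at y)"
  shows "\<exists>s t. 0 < s \<and> s < h \<and> 0 < t \<and> t < h \<and>
    f (x + h *\<^sub>R a + h *\<^sub>R b) - f (x + h *\<^sub>R a) - f (x + h *\<^sub>R b) + f x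
      = h * h * partial b (partial a f) (x + s *\<^sub>R a + t *\<^sub>R b)"
proof -
  define \<phi> where "\<phi> = (\<lambda>s. f ((x + h *\<^sub>R b) + s *\<^sub>R a) - f (x + s *\<^sub>R a))"
  have "(\<phi> has_real_derivative (partial a f ((x + h *\<^sub>R b) + s *\<^sub>R a) - partial a f (x + s *\<^sub>R a))) (at s)"
    if "0 \<le> s" "s \<le> h" for s
  proof -
    have shift: "x + h *\<^sub>R b + s *\<^sub>R a = x + s *\<^sub>R a + h *\<^sub>R b" by (simp add: algebra_simps)
    have m1: "x + h *\<^sub>R b + s *\<^sub>R a \<in> T" unfolding shift using box that h by simp
    have m2: "x + s *\<^sub>R a \<in> T" using box[of s 0] that h by simp
    show ?thesis unfolding \<phi>_def
      by (intro DERIV_diff differentiable_along_line) (use m1 m2 df in auto)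
  qed
  from MVT2[OF h, of \<phi>, OF this] obtain s1 where s1: "0 < s1" "s1 < h"
    "\<phi> h - \<phi> 0 = (h - 0) * (partial a f ((x + h *\<^sub>R b) + s1 *\<^sub>R a) - partial a f (x + s1 *\<^sub>R a))"
    by auto
  define \<psi> where "\<psi> = (\<lambda>t. partial a f ((x + s1 *\<^sub>R a) + t *\<^sub>R b))"
  have "(\<psi> has_real_derivative partial b (partial a f) ((x + s1 *\<^sub>R a) + t *\<^sub>R b)) (at t)"
    if "0 \<le> t" "t \<le> h" for t
  proof -
    have m: "x + s1 *\<^sub>R a + t *\<^sub>R b \<in> T" using box[of s1 t] that s1 by simp
    show ?thesis unfolding \<psi>_def by (rule differentiable_along_line) (use m da in auto)
  qed
  from MVT2[OF h, of \<psi>, OF this] obtain t1 where t1: "0 < t1" "t1 < h"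
    "\<psi> h - \<psi> 0 = (h - 0) * partial b (partial a f) ((x + s1 *\<^sub>R a) + t1 *\<^sub>R b)"
    by auto
  have shift_s1: "x + h *\<^sub>R b + s1 *\<^sub>R a = x + s1 *\<^sub>R a + h *\<^sub>R b" by (simp add: algebra_simps)
  have corner: "x + h *\<^sub>R b + h *\<^sub>R a = x + h *\<^sub>R a + h *\<^sub>R b" by (simp add: algebra_simps)
  have "f (x + h *\<^sub>R a + h *\<^sub>R b) - f (x + h *\<^sub>R a) - f (x + h *\<^sub>R b) + f x = \<phi> h - \<phi> 0"
    unfolding \<phi>_def corner by simp
  also have "\<dots> = h * (\<psi> h - \<psi> 0)" unfolding s1(3) unfolding \<psi>_def shift_s1 by simp
  also have "\<dots> = h * h * partial b (partial a f) (x + s1 *\<^sub>R a + t1 *\<^sub>R b)"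
    unfolding t1(3) by simp
  finally show ?thesis using s1 t1 by blast
qed

lemma mixed_partials_agree_nearby:
  fixes f :: "'a::euclidean_space \<Rightarrow> real"
  assumes r: "r > 0" "ball x r \<subseteq> S"
    and df: "\<forall>y\<in>S. f differentiable (at y)"
    and da: "\<forall>y\<in>S. partial a f differentiable (at y)"
    and db: "\<forall>y\<in>S. partial b f differentiable (at y)"
  shows "\<exists>y z. y \<in> ball x r \<and> z \<in> ball x r \<and> partial b (partial a f) y = partial a (partial b f) z"
proof -
  define h where "h = r / (2 * (norm a + norm b + 1))"
  have n: "0 < norm a + norm b + 1" using norm_ge_zero[of a] norm_ge_zero[of b] by linarith
  have h0: "h > 0" using r n by (simp add: h_def)
  have "h * (norm a + norm b) < h * (2 * (norm a + norm b + 1))"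
    using h0 n by (intro mult_strict_left_mono) auto
  then have h: "h > 0" "h * (norm a + norm b) < r" using h0 n by (simp_all add: h_def)
  have near: "x + s *\<^sub>R c + t *\<^sub>R c' \<in> ball x r"
    if "0 \<le> s" "s \<le> h" "0 \<le> t" "t \<le> h" "norm c + norm c' = norm a + norm b" for s t c c'
  proof -
    have "norm (s *\<^sub>R c + t *\<^sub>R c') \<le> s * norm c + t * norm c'"
      using norm_triangle_ineq[of "s *\<^sub>R c" "t *\<^sub>R c'"] that by simp
    also have "\<dots> \<le> h * norm c + h * norm c'"
      using that by (intro add_mono mult_right_mono) auto
    finally have "norm (s *\<^sub>R c + t *\<^sub>R c') < r"
      using h that by (simp add: distrib_left[symmetric])
    then show ?thesis by (simp add: dist_norm add.assoc norm_minus_commute add.commute)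
  qed
  have near_ab: "x + s *\<^sub>R a + t *\<^sub>R b \<in> ball x r"
    and near_ba: "x + s *\<^sub>R b + t *\<^sub>R a \<in> ball x r"
    if "0 \<le> s" "s \<le> h" "0 \<le> t" "t \<le> h" for s t
    using near[of s t a b] near[of s t b a] that by (simp_all add: add.commute)
  obtain s t where st: "0 < s" "s < h" "0 < t" "t < h"
    "f (x + h *\<^sub>R a + h *\<^sub>R b) - f (x + h *\<^sub>R a) - f (x + h *\<^sub>R b) + f x
      = h * h * partial b (partial a f) (x + s *\<^sub>R a + t *\<^sub>R b)"
    using mixed_difference_mean_value[OF h(1), of x a b S f] near_ab r df da by blast
  obtain s' t' where st': "0 < s'" "s' < h" "0 < t'" "t' < h"
    "f (x + h *\<^sub>R b + h *\<^sub>R a) - f (x + h *\<^sub>R b) - f (x + h *\<^sub>R a) + f x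
      = h * h * partial a (partial b f) (x + s' *\<^sub>R b + t' *\<^sub>R a)"
    using mixed_difference_mean_value[OF h(1), of x b a S f] near_ba r df db by blast
  have corner: "x + h *\<^sub>R b + h *\<^sub>R a = x + h *\<^sub>R a + h *\<^sub>R b" by (simp add: algebra_simps)
  have "h * h * partial b (partial a f) (x + s *\<^sub>R a + t *\<^sub>R b)
      = h * h * partial a (partial b f) (x + s' *\<^sub>R b + t' *\<^sub>R a)"
    using st(5) st'(5) unfolding corner by linarith
  then have "partial b (partial a f) (x + s *\<^sub>R a + t *\<^sub>R b)
      = partial a (partial b f) (x + s' *\<^sub>R b + t' *\<^sub>R a)"
    using h(1) by simp
  moreover have "x + s *\<^sub>R a + t *\<^sub>R b \<in> ball x r" "x + s' *\<^sub>R b + t' *\<^sub>R a \<in> ball x r"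
    using near_ab near_ba st st' by auto
  ultimately show ?thesis by blast
qed

lemma partial_partial_commute:
  fixes f :: "'a::euclidean_space \<Rightarrow> real"
  assumes S: "open S" "x \<in> S"
    and df: "\<forall>y\<in>S. f differentiable (at y)"
    and da: "\<forall>y\<in>S. partial a f differentiable (at y)"
    and db: "\<forall>y\<in>S. partial b f differentiable (at y)"
    and ca: "continuous_on S (partial a (partial b f))"
    and cb: "continuous_on S (partial b (partial a f))"
  shows "partial a (partial b f) x = partial b (partial a f) x"
proof -
  let ?A = "partial a (partial b f)" and ?B = "partial b (partial a f)"
  have "dist (?A x) (?B x) < 2 * e" if e: "e > 0" for e
  proof -
    obtain r0 where r0: "r0 > 0" "ball x r0 \<subseteq> S"
      using S open_contains_ball by blast
    obtain rA where rA: "rA > 0" "\<forall>y\<in>S. dist y x < rA \<longrightarrow> dist (?A y) (?A x) < e"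
      using ca S(2) e unfolding continuous_on_iff by blast
    obtain rB where rB: "rB > 0" "\<forall>y\<in>S. dist y x < rB \<longrightarrow> dist (?B y) (?B x) < e"
      using cb S(2) e unfolding continuous_on_iff by blast
    define r where "r = min r0 (min rA rB)"
    have r: "r > 0" "ball x r \<subseteq> S" using r0 rA rB by (auto simp: r_def)
    obtain y z where yz: "y \<in> ball x r" "z \<in> ball x r" "?B y = ?A z"
      using mixed_partials_agree_nearby[OF r df da db] by blast
    have "z \<in> S" "y \<in> S" "dist z x < rA" "dist y x < rB"
      using yz r(2) by (auto simp: r_def dist_commute)
    then have "dist (?A z) (?A x) < e" "dist (?B y) (?B x) < e"
      using rA rB by blast+
    then show ?thesis
      using dist_triangle[of "?A x" "?B x" "?A z"] yz(3) by (simp add: dist_commute)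
  qed
  from this[of "dist (?A x) (?B x) / 2"] show ?thesis by fastforce
qed

lemma hess_symmetric:
  fixes u :: "real^'n \<Rightarrow> real"
  assumes "open S" "x \<in> S" "Ck 3 S u"
  shows "transpose (hess u x) = hess u x"
proof -
  note d = Ck3_imp_differentiable[OF assms(3)]
  have "continuous_on S (partial (axis i 1) (partial (axis j 1) u))" for i j
    using d(3) by (meson continuous_at_imp_continuous_on differentiable_imp_continuous_within)
  then show ?thesis
    using partial_partial_commute[OF assms(1,2) d(1)] d(2)
    by (simp add: transpose_def hess_def vec_eq_iff)
qed

section \<open>Positive semidefinite matrices\<close>

lemma quadratic_form_eq_sum:
  fixes A :: "real^'n^'n"
  shows "\<xi> \<bullet> (A *v \<xi>) = (\<Sum>i\<in>UNIV. \<Sum>j\<in>UNIV. A$i$j * \<xi>$i * \<xi>$j)"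
  by (simp add: inner_vec_def matrix_vector_mult_def sum_distrib_left mult_ac)

lemma axis_vector_matrix_mult:
  fixes A :: "real^'n^'m"
  shows "axis i 1 v* A = A$i"
  by (simp add: vec_eq_iff vector_matrix_mult_def axis_def if_distrib if_distribR cong: if_cong)

lemma quadratic_form_add_axis:
  fixes A :: "real^'n^'n"
  assumes sym: "transpose A = A"
  shows "(x + t *\<^sub>R axis k 1) \<bullet> (A *v (x + t *\<^sub>R axis k 1))
       = x \<bullet> (A *v x) + 2 * t * (A$k \<bullet> x) + t\<^sup>2 * A$k$k"
proof -
  have "x \<bullet> (A *v axis k 1) = A$k \<bullet> x"
    using dot_lmul_matrix[of x A "axis k 1", symmetric] sym
    by (metis inner_axis inner_commute matrix_vector_mul_component real_inner_1_right
        transpose_matrix_vector)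
  moreover have "axis k 1 \<bullet> (A *v y) = A$k \<bullet> y" for y
    by (simp add: inner_axis' matrix_vector_mul_component)
  ultimately show ?thesis
    by (simp add: matrix_vector_right_distrib matrix_vector_mult_scaleR inner_add_left
        inner_add_right inner_axis power2_eq_square algebra_simps)
qed

lemma quadratic_form_rank_one:
  fixes v :: "real^'n"
  shows "\<xi> \<bullet> ((\<chi> i j. v$i * v$j) *v \<xi>) = (v \<bullet> \<xi>)\<^sup>2"
  by (simp add: inner_vec_def matrix_vector_mult_def power2_eq_square sum_product
      sum_distrib_left mult_ac)

lemma trace_rank_one_mult:
  fixes v :: "real^'n" and B :: "real^'n^'n"
  shows "trace ((\<chi> i j. v$i * v$j) ** B) = v \<bullet> (B *v v)"
  by (simp add: trace_def matrix_matrix_mult_def inner_vec_def matrix_vector_mult_def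
      sum_distrib_left) (subst sum.swap, simp add: mult_ac)

lemma psd_diagonal_nonneg:
  fixes A :: "real^'n^'n"
  assumes "\<forall>\<xi>. 0 \<le> \<xi> \<bullet> (A *v \<xi>)"
  shows "0 \<le> A$k$k"
  using assms[rule_format, of "axis k 1"] by (simp add: inner_axis' matrix_vector_mul_component inner_axis)

lemma psd_zero_diagonal_imp_zero_row:
  fixes A :: "real^'n^'n"
  assumes sym: "transpose A = A" and psd: "\<forall>\<xi>. 0 \<le> \<xi> \<bullet> (A *v \<xi>)" and "A$k$k = 0"
  shows "A$k = 0"
proof (rule ccontr)
  assume "A$k \<noteq> 0"
  then have pos: "A$k \<bullet> A$k > 0" by simp
  define q where "q = A$k \<bullet> (A *v A$k)"
  define t where "t = - (q + 1) / (2 * (A$k \<bullet> A$k))"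
  have "0 \<le> (A$k + t *\<^sub>R axis k 1) \<bullet> (A *v (A$k + t *\<^sub>R axis k 1))" using psd by blast
  also have "\<dots> = q + 2 * t * (A$k \<bullet> A$k)"
    using quadratic_form_add_axis[OF sym] assms(3) by (simp add: q_def)
  also have "\<dots> = -1" using pos by (simp add: t_def field_simps)
  finally show False by simp
qed

lemma psd_schur_complement:
  fixes A :: "real^'n^'n"
  assumes sym: "transpose A = A" and psd: "\<forall>\<xi>. 0 \<le> \<xi> \<bullet> (A *v \<xi>)" and pos: "A$k$k > 0"
    and v: "v = A$k /\<^sub>R sqrt (A$k$k)"
  shows "0 \<le> \<xi> \<bullet> ((A - (\<chi> i j. v$i * v$j)) *v \<xi>)"
proof -
  define t where "t = - (A$k \<bullet> \<xi>) / A$k$k"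
  have "0 \<le> (\<xi> + t *\<^sub>R axis k 1) \<bullet> (A *v (\<xi> + t *\<^sub>R axis k 1))" using psd by blast
  also have "\<dots> = \<xi> \<bullet> (A *v \<xi>) - (A$k \<bullet> \<xi>)\<^sup>2 / A$k$k"
    unfolding quadratic_form_add_axis[OF sym] t_def using pos
    by (simp add: field_simps power2_eq_square)
  also have "(A$k \<bullet> \<xi>)\<^sup>2 / A$k$k = (v \<bullet> \<xi>)\<^sup>2"
    using pos by (simp add: v power_mult_distrib power_inverse divide_inverse mult.commute)
  also have "\<xi> \<bullet> (A *v \<xi>) - (v \<bullet> \<xi>)\<^sup>2 = \<xi> \<bullet> ((A - (\<chi> i j. v$i * v$j)) *v \<xi>)"
    by (simp add: matrix_vector_mult_diff_rdistrib inner_diff_right quadratic_form_rank_one)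
  finally show ?thesis .
qed

lemma psd_split_off_rank_one:
  fixes A :: "real^'n^'n"
  assumes sym: "transpose A = A" and psd: "\<forall>\<xi>. 0 \<le> \<xi> \<bullet> (A *v \<xi>)" and pos: "A$k$k > 0"
  obtains P :: "real^'n^'n"
  where "\<And>B. \<forall>\<xi>. 0 \<le> \<xi> \<bullet> (B *v \<xi>) \<Longrightarrow> 0 \<le> trace (P ** B)"
    and "transpose (A - P) = A - P" "\<forall>\<xi>. 0 \<le> \<xi> \<bullet> ((A - P) *v \<xi>)"
    and "(A - P)$k = 0" "\<And>i. A$i = 0 \<Longrightarrow> (A - P)$i = 0"
proof
  define v where "v = A$k /\<^sub>R sqrt (A$k$k)"
  define P :: "real^'n^'n" where "P = (\<chi> i j. v$i * v$j)"
  show "0 \<le> trace (P ** B)" if "\<forall>\<xi>. 0 \<le> \<xi> \<bullet> (B *v \<xi>)" for B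
    unfolding P_def trace_rank_one_mult using that by blast
  have Asym: "A$i$j = A$j$i" for i j
    using arg_cong[OF sym, of "\<lambda>M. M$j$i"] by (simp add: transpose_def)
  show "transpose (A - P) = A - P"
    unfolding transpose_def vec_eq_iff by (simp add: Asym P_def mult.commute)
  show "\<forall>\<xi>. 0 \<le> \<xi> \<bullet> ((A - P) *v \<xi>)"
    using psd_schur_complement[OF sym psd pos v_def] by (simp add: P_def)
  have "sqrt (A$k$k) * sqrt (A$k$k) = A$k$k" using pos by simp
  then have "v$k * v$j = A$k$j" for j
    using pos by (simp add: v_def field_simps)
  then show "(A - P)$k = 0" by (simp add: P_def vec_eq_iff)
  show "(A - P)$i = 0" if "A$i = 0" for i
    using that Asym[of k i] by (simp add: P_def v_def vec_eq_iff)
qed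

lemma trace_mult_psd_nonneg:
  fixes A B :: "real^'n^'n"
  assumes "transpose A = A" "\<forall>\<xi>. 0 \<le> \<xi> \<bullet> (A *v \<xi>)" and psdB: "\<forall>\<xi>. 0 \<le> \<xi> \<bullet> (B *v \<xi>)"
  shows "0 \<le> trace (A ** B)"
proof -
  have "0 \<le> trace (A ** B)"
    if "finite S" "\<forall>i. i \<notin> S \<longrightarrow> A$i = 0" "transpose A = A" "\<forall>\<xi>. 0 \<le> \<xi> \<bullet> (A *v \<xi>)" for S A
    using that
  proof (induction S arbitrary: A rule: finite_induct)
    case empty
    have "A = 0" using empty.prems(1) by (simp add: vec_eq_iff)
    then show ?case by (simp add: trace_def)
  next
    case (insert k S)
    note supp = insert.prems(1) and sym = insert.prems(2) and psd = insert.prems(3)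
    show ?case
    proof (cases "A$k$k = 0")
      case True
      then have "A$k = 0" using psd_zero_diagonal_imp_zero_row[OF sym psd] by blast
      with supp have "\<forall>i. i \<notin> S \<longrightarrow> A$i = 0" by (metis insert_iff)
      then show ?thesis using insert.IH sym psd by blast
    next
      case False
      then have "A$k$k > 0" using psd_diagonal_nonneg[OF psd, of k] by linarith
      then obtain P where P: "0 \<le> trace (P ** B)"
        and rest: "transpose (A - P) = A - P" "\<forall>\<xi>. 0 \<le> \<xi> \<bullet> ((A - P) *v \<xi>)"
          "(A - P)$k = 0" "\<And>i. A$i = 0 \<Longrightarrow> (A - P)$i = 0"
        using psd_split_off_rank_one[OF sym psd] psdB by metis
      have "\<forall>i. i \<notin> S \<longrightarrow> (A - P)$i = 0" using supp rest(3,4) by (metis insert_iff)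
      then have "0 \<le> trace ((A - P) ** B)" using insert.IH rest(1,2) by blast
      moreover have "trace (A ** B) = trace ((A - P) ** B) + trace (P ** B)"
        by (simp add: trace_def matrix_matrix_mult_def left_diff_distrib sum_subtractf)
      ultimately show ?thesis using P by linarith
    qed
  qed
  from this[of UNIV A] assms show ?thesis by simp
qed

section \<open>Gradient bound for convex functions\<close>

lemma grad_inner_mono_along_segment:
  fixes u :: "real^'n \<Rightarrow> real"
  assumes seg: "\<forall>t\<in>{0..d}. x + t *\<^sub>R e \<in> S"
    and dp: "\<forall>y\<in>S. \<forall>j. partial (axis j 1) u differentiable (at y)"
    and H: "\<forall>y\<in>S. \<forall>\<xi>. 0 \<le> \<xi> \<bullet> (hess u y *v \<xi>)"
    and st: "0 \<le> s" "s \<le> t" "t \<le> d"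
  shows "grad u (x + s *\<^sub>R e) \<bullet> e \<le> grad u (x + t *\<^sub>R e) \<bullet> e"
proof (rule DERIV_nonneg_imp_nondecreasing[OF st(2)])
  fix r assume r: "s \<le> r" "r \<le> t"
  then have "x + r *\<^sub>R e \<in> S" using seg st by auto
  then have "((\<lambda>t. grad u (x + t *\<^sub>R e)) has_vector_derivative (e v* hess u (x + r *\<^sub>R e))) (at r)"
    using dp by (intro has_vector_derivative_grad_along_line) auto
  then have "((\<lambda>t. grad u (x + t *\<^sub>R e) \<bullet> e) has_real_derivative e \<bullet> (hess u (x + r *\<^sub>R e) *v e)) (at r)"
    unfolding has_vector_derivative_def has_field_derivative_def
    by (auto dest!: has_derivative_inner_left[where b = e]
        simp: dot_lmul_matrix mult_commute_abs)
  then show "\<exists>y. ((\<lambda>t. grad u (x + t *\<^sub>R e) \<bullet> e) has_real_derivative y) (at r) \<and> 0 \<le> y"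
    using H \<open>x + r *\<^sub>R e \<in> S\<close> by blast
qed

lemma norm_grad_le_of_psd_hess:
  fixes u :: "real^'n \<Rightarrow> real"
  assumes ball: "cball x d \<subseteq> S" and d: "d > 0"
    and du: "\<forall>y\<in>S. u differentiable (at y)"
    and dp: "\<forall>y\<in>S. \<forall>j. partial (axis j 1) u differentiable (at y)"
    and H: "\<forall>y\<in>S. \<forall>\<xi>. 0 \<le> \<xi> \<bullet> (hess u y *v \<xi>)"
    and C: "\<forall>y\<in>S. \<bar>u y\<bar> \<le> C"
  shows "norm (grad u x) \<le> 2 * C / d"
proof (cases "grad u x = 0")
  case True
  have "x \<in> S" using ball d centre_in_cball[of x d] by (blast intro: less_imp_le)
  then have "\<bar>u x\<bar> \<le> C" using C by blast
  then show ?thesis using True d by simp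
next
  case False
  define e where "e = grad u x /\<^sub>R norm (grad u x)"
  have "norm e = 1" using False by (simp add: e_def)
  then have seg: "\<forall>t\<in>{0..d}. x + t *\<^sub>R e \<in> S"
    using ball by (auto simp: dist_norm)
  have "((\<lambda>t. u (x + t *\<^sub>R e)) has_real_derivative grad u (x + t *\<^sub>R e) \<bullet> e) (at t)"
    if "t \<in> {0..d}" for t
    using differentiable_along_line partial_eq_grad_inner du seg that by metis
  then obtain z where z: "0 < z" "z < d"
    "u (x + d *\<^sub>R e) - u x = d * (grad u (x + z *\<^sub>R e) \<bullet> e)"
    using MVT2[OF d, of "\<lambda>t. u (x + t *\<^sub>R e)" "\<lambda>t. grad u (x + t *\<^sub>R e) \<bullet> e"] by auto
  have "norm (grad u x) = grad u x \<bullet> e"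
    using False by (simp add: e_def dot_square_norm power2_eq_square)
  also have "\<dots> \<le> grad u (x + z *\<^sub>R e) \<bullet> e"
    using grad_inner_mono_along_segment[OF seg dp H, of 0 z] z by simp
  finally have "d * norm (grad u x) \<le> u (x + d *\<^sub>R e) - u x"
    using z d by (simp add: mult_left_mono)
  also have "\<dots> \<le> 2 * C"
  proof -
    have "x + d *\<^sub>R e \<in> S" "x \<in> S" using seg d bspec[OF seg, of 0] by auto
    then show ?thesis using C by (smt (verit))
  qed
  finally show ?thesis using d by (simp add: pos_le_divide_eq mult.commute)
qed

section \<open>The divergence term\<close>

lemma partial_comp_graph_grad:
  fixes P :: "(real^'n) \<times> (real^'n) \<Rightarrow> real" and u :: "real^'n \<Rightarrow> real"
  assumes D: "(P has_derivative D) (at (x, grad u x))"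
    and du: "\<forall>j. partial (axis j 1) u differentiable (at x)"
  shows "partial a (\<lambda>y. P (y, grad u y)) x = D (a, a v* hess u x)"
proof -
  define v where "v = a v* hess u x"
  define \<gamma> where "\<gamma> = (\<lambda>t. (x + t *\<^sub>R a, grad u (x + t *\<^sub>R a)))"
  have "((\<lambda>t. x + t *\<^sub>R a) has_vector_derivative a) (at 0)"
    unfolding has_vector_derivative_def by (auto intro!: derivative_eq_intros)
  moreover have "((\<lambda>t. grad u (x + t *\<^sub>R a)) has_vector_derivative v) (at 0)"
    using has_vector_derivative_grad_along_line[of u x 0 a] du by (simp add: v_def)
  ultimately have "(\<gamma> has_vector_derivative (a, v)) (at 0)"
    unfolding \<gamma>_def by (rule has_vector_derivative_Pair)
  moreover have "(P has_derivative D) (at (\<gamma> 0))" using D by (simp add: \<gamma>_def)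
  ultimately have "((P \<circ> \<gamma>) has_derivative D \<circ> (\<lambda>h. h *\<^sub>R (a, v))) (at 0)"
    by (intro diff_chain_at) (simp_all add: has_vector_derivative_def)
  moreover have "D (h *\<^sub>R (a, v)) = h * D (a, v)" for h
    using linear_scale[OF has_derivative_linear[OF D], of h "(a, v)"] by simp
  ultimately have "((P \<circ> \<gamma>) has_derivative (\<lambda>h. h * D (a, v))) (at 0)"
    by (simp add: o_def)
  then show ?thesis
    unfolding partial_def v_def[symmetric]
    by (intro DERIV_imp_deriv) (simp add: has_field_derivative_def o_def \<gamma>_def mult_commute_abs)
qed

lemma partial_partial_snd_comp_grad:
  fixes F :: "real^'n \<Rightarrow> real^'n \<Rightarrow> real" and u :: "real^'n \<Rightarrow> real"
  assumes dP: "partial (0, b) (\<lambda>z. F (fst z) (snd z)) differentiable (at (x, grad u x))"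
    and du: "\<forall>j. partial (axis j 1) u differentiable (at x)"
  shows "partial a (\<lambda>y. partial b (F y) (grad u y)) x
     = partial a (\<lambda>y. partial b (F y) (grad u x)) x
       + (\<Sum>j\<in>UNIV. (a v* hess u x) $ j * partial (axis j 1) (partial b (F x)) (grad u x))"
proof -
  define P where "P = partial (0, b) (\<lambda>z. F (fst z) (snd z))"
  define v where "v = a v* hess u x"
  obtain D where D: "(P has_derivative D) (at (x, grad u x))"
    using dP unfolding P_def differentiable_def by blast
  have lD: "linear D" using D has_derivative_linear by blast
  have "partial a (\<lambda>y. partial b (F y) (grad u y)) x = D (a, v)"
    using partial_comp_graph_grad[OF D du, of a]
    by (simp add: P_def v_def partial_snd_eq_partial_uncurried[of b F])
  also have "D (a, v) = D (a, 0) + D (0, v)" using linear_add[OF lD, of "(a, 0)" "(0, v)"] by simp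
  also have "D (a, 0) = partial a (\<lambda>y. partial b (F y) (grad u x)) x"
    using partial_eq_derivative[OF D, of "(a, 0)"]
    by (simp add: partial_fst_partial_snd_eq_partial_uncurried[of a b F] P_def)
  also have "D (0, v) = (\<Sum>j\<in>UNIV. v$j * D (0, axis j 1))"
  proof -
    have "linear (\<lambda>h::real^'n. (0::real^'n, h))" by (simp add: linear_iff)
    from linear_compose[OF this lD] have "linear (\<lambda>h. D (0, h))" by (simp add: o_def)
    from linear_eq_sum_axis[OF this, of v] show ?thesis .
  qed
  also have "\<dots> = (\<Sum>j\<in>UNIV. v$j * partial (axis j 1) (partial b (F x)) (grad u x))"
    using partial_eq_derivative[OF D]
    by (simp add: partial_partial_snd_eq_partial_uncurried[of _ b F] P_def)
  finally show ?thesis by (simp add: v_def)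
qed

lemma divergence_partial_snd_comp_grad_bounds:
  fixes u :: "real^'n \<Rightarrow> real" and F :: "real^'n \<Rightarrow> real^'n \<Rightarrow> real"
    and D L divF :: real
  assumes S: "open S" "x \<in> S" and u: "Ck 3 S u"
    and cvx: "\<forall>\<xi>. 0 \<le> \<xi> \<bullet> (hess u x *v \<xi>)"
    and F: "smooth (\<lambda>z::(real^'n) \<times> (real^'n). F (fst z) (snd z))"
    and Fpp_psd: "\<forall>\<xi>. 0 \<le> (\<Sum>i\<in>UNIV. \<Sum>j\<in>UNIV.
            partial (axis i 1) (partial (axis j 1) (F x)) (grad u x) * \<xi> $ i * \<xi> $ j)"
    and Fpp_le: "\<forall>\<xi>. (\<Sum>i\<in>UNIV. \<Sum>j\<in>UNIV.
            partial (axis i 1) (partial (axis j 1) (F x)) (grad u x) * \<xi> $ i * \<xi> $ j) \<le> D * norm \<xi> ^ 2"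
    and Fpx: "\<forall>i. \<bar>partial (axis i 1) (\<lambda>y. partial (axis i 1) (F y) (grad u x)) x\<bar> \<le> L"
  defines "divF \<equiv> \<Sum>i\<in>UNIV. partial (axis i 1) (\<lambda>y. partial (axis i 1) (F y) (grad u y)) x"
  shows "- (real CARD('n) * L) \<le> divF" and "divF \<le> real CARD('n) * L + D * laplacian u x"
proof -
  define H where "H = hess u x"
  define M :: "real^'n^'n" where "M = (\<chi> i j. partial (axis i 1) (partial (axis j 1) (F x)) (grad u x))"
  define T where "T = (\<lambda>i. partial (axis i 1) (\<lambda>y. partial (axis i 1) (F y) (grad u x)) x)"
  have sym: "transpose H = H" unfolding H_def by (rule hess_symmetric[OF S u])
  have "partial (axis i 1) (\<lambda>y. partial (axis i 1) (F y) (grad u y)) x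
      = T i + (\<Sum>j\<in>UNIV. H$i$j * M$j$i)" for i
  proof -
    have "(0, axis i 1) \<in> (Basis :: ((real^'n) \<times> (real^'n)) set)" by (simp add: Basis_prod_def)
    then show ?thesis
      using partial_partial_snd_comp_grad[OF smooth_imp_partial_differentiable[OF F]]
        Ck3_imp_differentiable(2)[OF u] S(2)
      by (simp add: T_def H_def M_def axis_vector_matrix_mult)
  qed
  then have divF: "divF = sum T UNIV + trace (H ** M)"
    by (simp add: divF_def sum.distrib trace_def matrix_matrix_mult_def)
  have "\<bar>sum T UNIV\<bar> \<le> real CARD('n) * L"
    using order_trans[OF sum_abs sum_bounded_above[of UNIV "\<lambda>i. \<bar>T i\<bar>" L]] Fpx
    by (simp add: T_def)
  moreover have "0 \<le> trace (H ** M)"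
    using trace_mult_psd_nonneg[OF sym] cvx Fpp_psd
    by (simp add: H_def M_def quadratic_form_eq_sum)
  moreover have "0 \<le> trace (H ** (mat D - M))"
  proof (rule trace_mult_psd_nonneg[OF sym])
    show "\<forall>\<xi>. 0 \<le> \<xi> \<bullet> (H *v \<xi>)" using cvx by (simp add: H_def)
    have "mat D *v \<xi> = D *\<^sub>R \<xi>" for \<xi> :: "real^'n"
      by (simp add: vec_eq_iff matrix_vector_mult_def mat_def if_distrib[of "\<lambda>c. c * _"] cong: if_cong)
    then have "\<xi> \<bullet> ((mat D - M) *v \<xi>) = D * norm \<xi> ^ 2 - \<xi> \<bullet> (M *v \<xi>)" for \<xi>
      by (simp add: matrix_vector_mult_diff_rdistrib inner_diff_right power2_norm_eq_inner)
    then show "\<forall>\<xi>. 0 \<le> \<xi> \<bullet> ((mat D - M) *v \<xi>)"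
      using Fpp_le by (simp add: M_def quadratic_form_eq_sum)
  qed
  moreover have "trace (H ** (mat D - M)) = D * laplacian u x - trace (H ** M)"
  proof -
    have "(H ** (mat D - M))$i$i = D * H$i$i - (H ** M)$i$i" for i
      by (simp add: matrix_matrix_mult_def mat_def right_diff_distrib sum_subtractf
          if_distrib[of "\<lambda>c. _ * c"] cong: if_cong)
    moreover have "laplacian u x = trace H" by (simp add: H_def laplacian_def trace_def hess_def)
    ultimately show ?thesis by (simp add: trace_def sum_subtractf sum_distrib_left)
  qed
  ultimately show "- (real CARD('n) * L) \<le> divF" and "divF \<le> real CARD('n) * L + D * laplacian u x"
    unfolding divF by (simp_all add: abs_le_iff)
qed

lemma divergence_bounds_for_bounded_convex:
  fixes u :: "real^'n \<Rightarrow> real" and F :: "real^'n \<Rightarrow> real^'n \<Rightarrow> real"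
    and C D d :: real
  assumes S: "open S" and ball: "cball x d \<subseteq> S" and d: "d > 0" and u: "Ck 3 S u"
    and cvx: "\<forall>y\<in>S. \<forall>\<xi>. 0 \<le> \<xi> \<bullet> (hess u y *v \<xi>)" and C: "\<forall>y\<in>S. \<bar>u y\<bar> \<le> C"
    and F: "smooth (\<lambda>z::(real^'n) \<times> (real^'n). F (fst z) (snd z))"
    and Fpp_psd: "\<forall>p \<xi>. 0 \<le> (\<Sum>i\<in>UNIV. \<Sum>j\<in>UNIV.
            partial (axis i 1) (partial (axis j 1) (F x)) p * \<xi> $ i * \<xi> $ j)"
    and Fpp_le: "\<forall>p \<xi>. (\<Sum>i\<in>UNIV. \<Sum>j\<in>UNIV.
            partial (axis i 1) (partial (axis j 1) (F x)) p * \<xi> $ i * \<xi> $ j) \<le> D * norm \<xi> ^ 2"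
    and Fpx: "\<forall>p i. \<bar>partial (axis i 1) (\<lambda>y. partial (axis i 1) (F y) p) x\<bar> \<le> D * (norm p + 1)"
    and D: "D \<ge> 0"
  defines "divF \<equiv> \<Sum>i\<in>UNIV. partial (axis i 1) (\<lambda>y. partial (axis i 1) (F y) (grad u y)) x"
    and "L \<equiv> D * (2 * C / d + 1)"
  shows "- (real CARD('n) * L) \<le> divF" and "divF \<le> real CARD('n) * L + D * laplacian u x"
proof -
  have x: "x \<in> S" using ball d centre_in_cball[of x d] by (blast intro: less_imp_le)
  have "norm (grad u x) \<le> 2 * C / d"
    using norm_grad_le_of_psd_hess[OF ball d Ck3_imp_differentiable(1,2)[OF u] cvx C] .
  then have "D * (norm (grad u x) + 1) \<le> L" using D by (simp add: L_def mult_left_mono)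
  then have "\<forall>i. \<bar>partial (axis i 1) (\<lambda>y. partial (axis i 1) (F y) (grad u x)) x\<bar> \<le> L"
    using Fpx by (meson order_trans)
  from divergence_partial_snd_comp_grad_bounds[OF S(1) x u bspec[OF cvx x] F
      spec[OF Fpp_psd] spec[OF Fpp_le] this]
  show "- (real CARD('n) * L) \<le> divF" and "divF \<le> real CARD('n) * L + D * laplacian u x"
    unfolding divF_def by simp_all
qed

lemma solves_P_imp_Ck3_psd_hess:
  assumes "solves_P \<Omega> \<Omega>0 F0 F1 \<phi> \<psi> \<rho> s \<epsilon> u"
  shows "Ck 3 \<Omega> u" and "\<forall>y\<in>\<Omega>. \<forall>\<xi>. 0 \<le> \<xi> \<bullet> (hess u y *v \<xi>)"
proof -
  show "Ck 3 \<Omega> u" using assms by (simp add: solves_P_def Ck_bar_def)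
  obtain l where "l > 0" "\<forall>y\<in>\<Omega>. \<forall>\<xi>. l * norm \<xi> ^ 2 \<le> \<xi> \<bullet> (hess u y *v \<xi>)"
    using assms by (auto simp: solves_P_def uniformly_convex_fun_def)
  then show "\<forall>y\<in>\<Omega>. \<forall>\<xi>. 0 \<le> \<xi> \<bullet> (hess u y *v \<xi>)"
    by (meson order_trans mult_nonneg_nonneg less_imp_le zero_le_power2)
qed

theorem lemma2p2:
  fixes \<Omega> \<Omega>0 :: "(real^'n) set"
    and \<phi> \<psi> \<rho> :: "real^'n \<Rightarrow> real"
    and F0 :: "real^'n \<Rightarrow> real \<Rightarrow> real"
    and F1 :: "real^'n \<Rightarrow> real^'n \<Rightarrow> real"
    and \<eta> :: "real \<Rightarrow> real"
    and Dstar s \<epsilon>0 C :: real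
  assumes n2: "CARD('n) \<ge> 2"
    and dom0: "bounded \<Omega>0" "open \<Omega>0" "convex \<Omega>0" "smooth_domain \<Omega>0"
    and dom: "bounded \<Omega>" "open \<Omega>" "convex \<Omega>" "smooth_domain \<Omega>"
    and sub: "closure \<Omega>0 \<subseteq> \<Omega>"
    and rho: "smooth \<rho>" "\<Omega> = {x. \<rho> x < 0}" "\<forall>x\<in>frontier \<Omega>. \<rho> x = 0 \<and> grad \<rho> x \<noteq> 0"
      "\<exists>c>0. \<forall>x\<in>closure \<Omega>. \<forall>\<xi>. \<xi> \<bullet> (hess \<rho> x *v \<xi>) \<ge> c * norm \<xi> ^ 2"
    and phi: "Ck_bar 5 \<Omega> \<phi>" "convex_on (closure \<Omega>) \<phi>"
    and psi: "Ck_bar 3 \<Omega> \<psi>" "\<forall>x\<in>frontier \<Omega>. \<psi> x > 0"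
    and eta: "continuous_on {0..} \<eta>" "mono_on {0..} \<eta>" "\<forall>t\<ge>0. \<eta> t \<ge> 0"
    and F0: "smooth (\<lambda>xz::(real^'n) \<times> real. F0 (fst xz) (snd xz))"
      "\<forall>x\<in>\<Omega>0. \<forall>z zt. (deriv (F0 x) z - deriv (F0 x) zt) * (z - zt) \<ge> 0"
      "\<forall>x\<in>\<Omega>0. \<forall>z. \<bar>F0 x z\<bar> + \<bar>deriv (F0 x) z\<bar> \<le> \<eta> \<bar>z\<bar>"
    and Dpos: "Dstar > 0"
    and F1: "smooth (\<lambda>xp::(real^'n) \<times> (real^'n). F1 (fst xp) (snd xp))"
      "\<forall>x\<in>\<Omega>0. \<forall>p \<xi>. 0 \<le> (\<Sum>i\<in>UNIV. \<Sum>j\<in>UNIV.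
            partial (axis i 1) (partial (axis j 1) (F1 x)) p * \<xi> $ i * \<xi> $ j)"
      "\<forall>x\<in>\<Omega>0. \<forall>p \<xi>. (\<Sum>i\<in>UNIV. \<Sum>j\<in>UNIV.
            partial (axis i 1) (partial (axis j 1) (F1 x)) p * \<xi> $ i * \<xi> $ j) \<le> Dstar * norm \<xi> ^ 2"
      "\<forall>x\<in>\<Omega>0. \<forall>p i. \<bar>partial (axis i 1) (\<lambda>y. partial (axis i 1) (F1 y) p) x\<bar> \<le> Dstar * (norm p + 1)"
    and s: "s > real CARD('n)"
    and eps0: "\<epsilon>0 > 0"
    and Linf: "\<forall>\<epsilon>. 0 < \<epsilon> \<and> \<epsilon> \<le> \<epsilon>0 \<longrightarrow> (\<forall>u. solves_P \<Omega> \<Omega>0 F0 F1 \<phi> \<psi> \<rho> s \<epsilon> u \<longrightarrow>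
                 (\<forall>x\<in>\<Omega>. \<bar>u x\<bar> \<le> C))"
  shows "\<exists>Ct>0. \<forall>\<epsilon> u. 0 < \<epsilon> \<and> \<epsilon> \<le> \<epsilon>0 \<and> solves_P \<Omega> \<Omega>0 F0 F1 \<phi> \<psi> \<rho> s \<epsilon> u \<longrightarrow>
           (\<forall>x\<in>\<Omega>0. - Ct - Dstar * laplacian u x \<le> f_eps \<Omega>0 F0 F1 \<phi> \<rho> \<epsilon> u x
                     \<and> f_eps \<Omega>0 F0 F1 \<phi> \<rho> \<epsilon> u x \<le> Ct)"
proof -
  obtain d where d: "d > 0" "(\<Union>x\<in>closure \<Omega>0. cball x d) \<subseteq> \<Omega>"
    using compact_subset_open_imp_cball_epsilon_subset[OF _ dom(2) sub] dom0(1)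
    by (metis compact_closure)
  \<comment> \<open>C is only known to be nonnegative once a solution exists, hence the absolute values.\<close>
  define L where "L = Dstar * (2 * \<bar>C\<bar> / d + 1)"
  define Ct where "Ct = \<bar>\<eta> \<bar>C\<bar>\<bar> + real CARD('n) * L + 1"
  have "L \<ge> 0" using Dpos d by (simp add: L_def)
  then have "Ct > 0" unfolding Ct_def by (simp add: add_nonneg_pos)
  moreover have "- Ct - Dstar * laplacian u x \<le> f_eps \<Omega>0 F0 F1 \<phi> \<rho> \<epsilon> u x
      \<and> f_eps \<Omega>0 F0 F1 \<phi> \<rho> \<epsilon> u x \<le> Ct"
    if \<epsilon>: "0 < \<epsilon>" "\<epsilon> \<le> \<epsilon>0" and sol: "solves_P \<Omega> \<Omega>0 F0 F1 \<phi> \<psi> \<rho> s \<epsilon> u" and x: "x \<in> \<Omega>0"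
    for \<epsilon> u x
  proof -
    have uC: "\<forall>y\<in>\<Omega>. \<bar>u y\<bar> \<le> C" using Linf \<epsilon> sol by blast
    have ball: "cball x d \<subseteq> \<Omega>" using d(2) x closure_subset by blast
    then have "x \<in> \<Omega>" using d(1) by auto
    then have C: "\<bar>u x\<bar> \<le> C" "\<bar>C\<bar> = C" using uC by force+
    note divF = divergence_bounds_for_bounded_convex[OF dom(2) ball d(1)
        solves_P_imp_Ck3_psd_hess[OF sol] uC F1(1) bspec[OF F1(2) x] bspec[OF F1(3) x]
        bspec[OF F1(4) x] less_imp_le[OF Dpos]]
    have "\<eta> \<bar>u x\<bar> \<le> \<eta> C"
      using mono_onD[OF eta(2), of "\<bar>u x\<bar>" C] C by simp
    then have "\<bar>deriv (F0 x) (u x)\<bar> \<le> \<eta> C"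
      using F0(3) x by (smt (verit))
    then show ?thesis
      using divF x by (simp add: f_eps_def Ct_def L_def C(2) abs_le_iff)
  qed
  ultimately show ?thesis by blast
qed

end
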